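(* Let $x_0\in\mathbb{R}$ be a constant leader state and consider scalar followers updated synchronously for $t\in\mathbb{Z}_{\ge0}$ by $$x_i(t+1)=\frac{1}{1+n_i+\gamma_i}\Big(x_i(t)+\sum_{j\in\mathcal{N}_i}x_j(t-T_{ji})+\gamma_i x_0\Big),\qquad i=1,\dots,n,$$ where the neighbor sets $\mathcal{N}_i$ among followers are fixed and symmetric, $n_i=|\mathcal{N}_i|$, $\gamma_i\in\{0,1\}$, the delays $T_{ji}\in\mathbb{Z}_{\ge0}$ are constant, and the whole network including the leader (edges from the leader to each $i$ with $\gamma_i=1$) is connected. Then, regardless of the delays and initial values, $x_i(t)\to x_0$ as $t\to\infty$ for all $i$. *)

theory Defs
  imports "HOL-Analysis.Analysis"
begin

text \<open>Network of n followers 1..n plus a leader node 0.  Undirected edges: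
  between followers i, j (1 \<le> i, j \<le> n) iff j \<in> N i (N symmetric), and
  between the leader 0 and follower i iff gamma i = 1.\<close>

definition net_edges :: "nat \<Rightarrow> (nat \<Rightarrow> nat set) \<Rightarrow> (nat \<Rightarrow> real) \<Rightarrow> (nat \<times> nat) set" where
  "net_edges n N gamma =
     {(i, j). i \<in> {1..n} \<and> j \<in> {1..n} \<and> j \<in> N i}
     \<union> {(0, i) | i. i \<in> {1..n} \<and> gamma i = 1}
     \<union> {(i, 0) | i. i \<in> {1..n} \<and> gamma i = 1}"

definition network_connected :: "nat \<Rightarrow> (nat \<Rightarrow> nat set) \<Rightarrow> (nat \<Rightarrow> real) \<Rightarrow> bool" where
  "network_connected n N gamma =
     (\<forall>u\<in>{0..n}. \<forall>v\<in>{0..n}. (u, v) \<in> (net_edges n N gamma)\<^sup>*)"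

end

theory Submission
  imports Defs
begin

text \<open>Work with the errors \<open>y\<^sub>i = x\<^sub>i - x\<^sub>0\<close>, which follow the same averaging rule with the
  leader replaced by 0. Let \<open>M t\<close> be the largest \<open>|y\<^sub>i(s)|\<close> over the window
  \<open>t - D \<le> s \<le> t\<close>, where \<open>D\<close> is the largest delay. Every new value is a weighted average
  of values in the current window (and of 0), so \<open>M\<close> is non-increasing. A follower
  listening to the leader puts positive weight on 0, so after one step its error is at most
  \<open>(1 - \<epsilon>) M t\<close>; a follower listening to a node with this property inherits it with a
  smaller \<open>\<epsilon>\<close> and a later start. By connectivity every follower is reached, hence
  \<open>M (t + L) \<le> (1 - \<epsilon>) M t\<close> for a uniform \<open>L\<close> and \<open>\<epsilon> > 0\<close>, and \<open>M\<close> tends to 0.\<close>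

lemma decseq_tendsto_zero_if_contracts:
  fixes M :: "nat \<Rightarrow> real"
  assumes "decseq M" and nonneg: "\<And>t. 0 \<le> M t"
    and contracts: "\<And>t. M (t + L) \<le> q * M t" and "q < 1"
  shows "M \<longlonglongrightarrow> 0"
proof -
  obtain l where lim: "M \<longlonglongrightarrow> l" and "\<forall>t. l \<le> M t"
    using decseq_convergent[OF \<open>decseq M\<close>, of 0] nonneg by blast
  have "l \<le> q * l"
    using LIMSEQ_ignore_initial_segment[OF lim, of L] tendsto_mult_left[OF lim, of q]
    by (rule LIMSEQ_le) (use contracts in blast)
  moreover have "0 \<le> l"
    using lim by (rule LIMSEQ_le_const) (use nonneg in blast)
  ultimately have "l = 0"
    using \<open>q < 1\<close> by (smt (verit) mult_le_cancel_right1)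
  with lim show ?thesis by simp
qed

locale delayed_leader_follower =
  fixes n :: nat and N :: "nat \<Rightarrow> nat set" and gamma :: "nat \<Rightarrow> real"
    and T :: "nat \<Rightarrow> nat \<Rightarrow> nat" and y :: "nat \<Rightarrow> int \<Rightarrow> real"
  assumes nbrs_subset: "\<And>i. i \<in> {1..n} \<Longrightarrow> N i \<subseteq> {1..n}"
    and gamma_nonneg: "\<And>i. i \<in> {1..n} \<Longrightarrow> 0 \<le> gamma i"
    and update: "\<And>i t. i \<in> {1..n} \<Longrightarrow>
       y i (int t + 1) =
         (y i (int t) + (\<Sum>j\<in>N i. y j (int t - int (T j i)))) / (1 + real (card (N i)) + gamma i)"
begin

definition max_delay :: nat where
  "max_delay = Max ((\<lambda>(i, j). T j i) ` ({1..n} \<times> {1..n}))"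

definition window_max :: "nat \<Rightarrow> real" where
  "window_max t =
     Max (insert 0 ((\<lambda>(i, s). \<bar>y i s\<bar>) ` ({1..n} \<times> {int t - int max_delay .. int t})))"

lemma finite_nbrs: "i \<in> {1..n} \<Longrightarrow> finite (N i)"
  using nbrs_subset finite_subset by blast

lemma delay_le_max_delay: "i \<in> {1..n} \<Longrightarrow> j \<in> N i \<Longrightarrow> T j i \<le> max_delay"
  unfolding max_delay_def using nbrs_subset by (intro Max_ge) force+

lemma weight_pos: "i \<in> {1..n} \<Longrightarrow> 0 < 1 + real (card (N i)) + gamma i"
  using gamma_nonneg by (simp add: add_pos_nonneg)

lemma abs_update_le:
  assumes "i \<in> {1..n}"
  shows "\<bar>y i (int t + 1)\<bar>
    \<le> (\<bar>y i (int t)\<bar> + (\<Sum>j\<in>N i. \<bar>y j (int t - int (T j i))\<bar>)) / (1 + real (card (N i)) + gamma i)"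
proof -
  have "\<bar>y i (int t) + (\<Sum>j\<in>N i. y j (int t - int (T j i)))\<bar>
      \<le> \<bar>y i (int t)\<bar> + (\<Sum>j\<in>N i. \<bar>y j (int t - int (T j i))\<bar>)"
    by (rule order_trans[OF abs_triangle_ineq add_left_mono[OF sum_abs]])
  then show ?thesis
    using weight_pos[OF assms] by (simp add: update[OF assms] abs_divide divide_right_mono)
qed

lemma window_max_nonneg: "0 \<le> window_max t"
  unfolding window_max_def by (intro Max_ge) auto

lemma abs_le_window_max:
  "i \<in> {1..n} \<Longrightarrow> int t - int max_delay \<le> s \<Longrightarrow> s \<le> int t \<Longrightarrow> \<bar>y i s\<bar> \<le> window_max t"
  unfolding window_max_def by (intro Max_ge) force+

lemma window_max_le:
  assumes "\<And>i s. i \<in> {1..n} \<Longrightarrow> int t - int max_delay \<le> s \<Longrightarrow> s \<le> int t \<Longrightarrow> \<bar>y i s\<bar> \<le> B"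
    and "0 \<le> B"
  shows "window_max t \<le> B"
  unfolding window_max_def using assms by (subst Max_le_iff) auto

lemma window_max_Suc_le: "window_max (Suc t) \<le> window_max t"
proof (rule window_max_le[OF _ window_max_nonneg])
  fix i s
  assume i: "i \<in> {1..n}" and s: "int (Suc t) - int max_delay \<le> s" "s \<le> int (Suc t)"
  show "\<bar>y i s\<bar> \<le> window_max t"
  proof (cases "s = int t + 1")
    case True
    let ?M = "window_max t" and ?c = "real (card (N i))"
    have self: "\<bar>y i (int t)\<bar> \<le> ?M"
      by (rule abs_le_window_max[OF i]) auto
    have nbrs: "(\<Sum>j\<in>N i. \<bar>y j (int t - int (T j i))\<bar>) \<le> ?c * ?M"
    proof (rule sum_bounded_above)
      fix j assume "j \<in> N i"
      then show "\<bar>y j (int t - int (T j i))\<bar> \<le> ?M"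
        using delay_le_max_delay[OF i] nbrs_subset[OF i] by (intro abs_le_window_max) auto
    qed
    have "\<bar>y i s\<bar> \<le> (?M + ?c * ?M) / (1 + ?c + gamma i)"
      unfolding True using self nbrs weight_pos[OF i]
      by (intro order_trans[OF abs_update_le[OF i]] divide_right_mono) auto
    also have "\<dots> \<le> ?M"
      using weight_pos[OF i] gamma_nonneg[OF i] window_max_nonneg[of t]
      by (simp add: divide_le_eq algebra_simps)
    finally show ?thesis .
  next
    case False
    with s show ?thesis
      by (intro abs_le_window_max[OF i]) auto
  qed
qed

lemma decseq_window_max: "decseq window_max"
  using window_max_Suc_le by (rule decseq_SucI)

lemma abs_le_window_max_later:
  assumes "i \<in> {1..n}" and "int t - int max_delay \<le> s"
  shows "\<bar>y i s\<bar> \<le> window_max t"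
proof (cases "s \<le> int t")
  case False
  then have "\<bar>y i s\<bar> \<le> window_max (nat s)"
    using assms by (intro abs_le_window_max) auto
  also have "\<dots> \<le> window_max t"
    using decseq_window_max False by (simp add: decseq_def)
  finally show ?thesis .
next
  case True
  then show ?thesis
    by (rule abs_le_window_max[OF assms])
qed

lemma abs_delayed_le_window_max:
  assumes "i \<in> {1..n}" and "j \<in> N i" and "t \<le> r"
  shows "\<bar>y j (int r - int (T j i))\<bar> \<le> window_max t"
proof (rule abs_le_window_max_later)
  show "j \<in> {1..n}"
    using assms nbrs_subset by blast
  show "int t - int max_delay \<le> int r - int (T j i)"
    using assms delay_le_max_delay[OF assms(1,2)] by linarith
qed

definition contracts_after :: "nat set \<Rightarrow> nat \<Rightarrow> real \<Rightarrow> bool" where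
  "contracts_after V K \<epsilon> \<longleftrightarrow> 0 < \<epsilon> \<and> \<epsilon> \<le> 1 \<and>
     (\<forall>v\<in>V. \<forall>t s. int t + int K \<le> s \<longrightarrow> \<bar>y v s\<bar> \<le> (1 - \<epsilon>) * window_max t)"

lemma contracts_after_mono:
  assumes "contracts_after V K \<epsilon>" and "K \<le> K'" and "0 < \<epsilon>'" and "\<epsilon>' \<le> \<epsilon>"
  shows "contracts_after V K' \<epsilon>'"
  unfolding contracts_after_def
proof (intro conjI ballI allI impI)
  fix v t s
  assume "v \<in> V" and "int t + int K' \<le> s"
  then have "\<bar>y v s\<bar> \<le> (1 - \<epsilon>) * window_max t"
    using assms(1,2) unfolding contracts_after_def by auto
  also have "\<dots> \<le> (1 - \<epsilon>') * window_max t"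
    using assms(4) window_max_nonneg by (intro mult_right_mono) auto
  finally show "\<bar>y v s\<bar> \<le> (1 - \<epsilon>') * window_max t" .
qed (use assms in \<open>auto simp: contracts_after_def\<close>)

lemma contracts_after_Un:
  assumes "contracts_after V K \<epsilon>" and "contracts_after W K' \<epsilon>'"
  shows "contracts_after (V \<union> W) (max K K') (min \<epsilon> \<epsilon>')"
proof -
  have "0 < min \<epsilon> \<epsilon>'"
    using assms unfolding contracts_after_def by simp
  then have "contracts_after V (max K K') (min \<epsilon> \<epsilon>')" "contracts_after W (max K K') (min \<epsilon> \<epsilon>')"
    by (auto intro: contracts_after_mono[OF assms(1)] contracts_after_mono[OF assms(2)])
  then show ?thesis
    unfolding contracts_after_def by blast
qed

lemma contracts_after_finite:
  assumes "finite V" and "\<And>v. v \<in> V \<Longrightarrow> \<exists>K \<epsilon>. contracts_after {v} K \<epsilon>"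
  shows "\<exists>K \<epsilon>. contracts_after V K \<epsilon>"
  using assms
proof (induction rule: finite_induct)
  case empty
  show ?case
    unfolding contracts_after_def by (intro exI[of _ 0] exI[of _ 1]) simp
next
  case (insert v V)
  then obtain K \<epsilon> K' \<epsilon>' where "contracts_after {v} K \<epsilon>" "contracts_after V K' \<epsilon>'"
    by blast
  then have "contracts_after ({v} \<union> V) (max K K') (min \<epsilon> \<epsilon>')"
    by (rule contracts_after_Un)
  then show ?case
    by auto
qed

lemma sum_delayed_le_window_max:
  assumes "i \<in> {1..n}" and "A \<subseteq> N i" and "t \<le> r"
  shows "(\<Sum>j\<in>A. \<bar>y j (int r - int (T j i))\<bar>) \<le> real (card A) * window_max t"
  using assms abs_delayed_le_window_max by (intro sum_bounded_above) blast

lemma contracts_after_if_leader_nbr: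
  assumes v: "v \<in> {1..n}" and "0 < gamma v"
  shows "contracts_after {v} 1 (gamma v / (1 + real (card (N v)) + gamma v))"
  unfolding contracts_after_def
proof (intro conjI ballI allI impI)
  let ?c = "real (card (N v))"
  let ?w = "1 + ?c + gamma v"
  show "0 < gamma v / ?w" "gamma v / ?w \<le> 1"
    using \<open>0 < gamma v\<close> by auto
  fix v' t s
  assume "v' \<in> {v}" and "int t + int 1 \<le> s"
  define r where "r = nat (s - 1)"
  have v': "v' = v" and s: "s = int r + 1" and "t \<le> r"
    using \<open>v' \<in> {v}\<close> \<open>int t + int 1 \<le> s\<close> unfolding r_def by auto
  let ?M = "window_max t"
  have self: "\<bar>y v (int r)\<bar> \<le> ?M"
    by (rule abs_le_window_max_later[OF v]) (use \<open>t \<le> r\<close> in simp)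
  have "\<bar>y v s\<bar> \<le> (\<bar>y v (int r)\<bar> + (\<Sum>j\<in>N v. \<bar>y j (int r - int (T j v))\<bar>)) / ?w"
    unfolding s by (rule abs_update_le[OF v])
  also have "\<dots> \<le> (?M + ?c * ?M) / ?w"
    using self sum_delayed_le_window_max[OF v order_refl \<open>t \<le> r\<close>] weight_pos[OF v]
    by (intro divide_right_mono add_mono) auto
  also have "\<dots> = (1 - gamma v / ?w) * ?M"
    using weight_pos[OF v] by (simp add: field_simps)
  finally show "\<bar>y v' s\<bar> \<le> (1 - gamma v / ?w) * ?M"
    using v' by simp
qed

lemma contracts_after_if_nbr:
  assumes v: "v \<in> {1..n}" and u: "u \<in> N v" and contr: "contracts_after {u} K \<epsilon>"
  shows "contracts_after {v} (K + max_delay + 1) (\<epsilon> / (1 + real (card (N v)) + gamma v))"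
  unfolding contracts_after_def
proof (intro conjI ballI allI impI)
  let ?c = "real (card (N v))"
  let ?w = "1 + ?c + gamma v"
  have eps: "0 < \<epsilon>" "\<epsilon> \<le> 1"
    using contr unfolding contracts_after_def by auto
  show "0 < \<epsilon> / ?w" "\<epsilon> / ?w \<le> 1"
    using eps gamma_nonneg[OF v] by (auto simp: divide_le_eq)
  fix v' t s
  assume "v' \<in> {v}" and "int t + int (K + max_delay + 1) \<le> s"
  define r where "r = nat (s - 1)"
  have v': "v' = v" and s: "s = int r + 1" and late: "t + K + max_delay \<le> r"
    using \<open>v' \<in> {v}\<close> \<open>int t + int (K + max_delay + 1) \<le> s\<close> unfolding r_def by auto
  let ?M = "window_max t"
  have self: "\<bar>y v (int r)\<bar> \<le> ?M"
    by (rule abs_le_window_max_later[OF v]) (use late in simp)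
  have "int t + int K \<le> int r - int (T u v)"
    using delay_le_max_delay[OF v u] late by linarith
  then have from_u: "\<bar>y u (int r - int (T u v))\<bar> \<le> (1 - \<epsilon>) * ?M"
    using contr unfolding contracts_after_def by blast
  have others: "(\<Sum>j\<in>N v - {u}. \<bar>y j (int r - int (T j v))\<bar>) \<le> (?c - 1) * ?M"
  proof -
    have "0 < card (N v)"
      using u finite_nbrs[OF v] card_gt_0_iff by blast
    then have "real (card (N v - {u})) = ?c - 1"
      using u by (simp add: card_Diff_singleton of_nat_diff)
    then show ?thesis
      using sum_delayed_le_window_max[OF v _, of "N v - {u}" t r] late by auto
  qed
  have nbrs: "(\<Sum>j\<in>N v. \<bar>y j (int r - int (T j v))\<bar>) \<le> (1 - \<epsilon>) * ?M + (?c - 1) * ?M"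
    using from_u others sum.remove[OF finite_nbrs[OF v] u, of "\<lambda>j. \<bar>y j (int r - int (T j v))\<bar>"]
    by linarith
  have "\<bar>y v s\<bar> \<le> (\<bar>y v (int r)\<bar> + (\<Sum>j\<in>N v. \<bar>y j (int r - int (T j v))\<bar>)) / ?w"
    unfolding s by (rule abs_update_le[OF v])
  also have "\<dots> \<le> (?M + ((1 - \<epsilon>) * ?M + (?c - 1) * ?M)) / ?w"
    using self nbrs weight_pos[OF v] by (intro divide_right_mono add_mono) auto
  also have "\<dots> \<le> (?M + ((1 - \<epsilon>) * ?M + (?c - 1) * ?M) + gamma v * ?M) / ?w"
    using weight_pos[OF v] mult_nonneg_nonneg[OF gamma_nonneg[OF v] window_max_nonneg[of t]]
    by (intro divide_right_mono) auto
  also have "\<dots> = (1 - \<epsilon> / ?w) * ?M"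
    using weight_pos[OF v] by (simp add: field_simps)
  finally show "\<bar>y v' s\<bar> \<le> (1 - \<epsilon> / ?w) * ?M"
    using v' by simp
qed

lemma contracts_after_if_connected:
  assumes "network_connected n N gamma" and "v \<in> {1..n}"
  shows "\<exists>K \<epsilon>. contracts_after {v} K \<epsilon>"
proof -
  have "(v, 0) \<in> (net_edges n N gamma)\<^sup>*"
    using assms unfolding network_connected_def by auto
  from this \<open>v \<in> {1..n}\<close> show ?thesis
  proof (induction rule: converse_rtrancl_induct)
    case base
    then show ?case by simp
  next
    case (step v u)
    from step.hyps(1) step.prems consider (follower) "u \<in> {1..n}" "u \<in> N v" | (leader) "gamma v = 1"
      unfolding net_edges_def by auto
    then show ?case
    proof cases
      case follower
      then show ?thesis
        using step.IH contracts_after_if_nbr[OF step.prems] by blast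
    next
      case leader
      then show ?thesis
        using contracts_after_if_leader_nbr[OF step.prems] by auto
    qed
  qed
qed

lemma window_max_contracts:
  assumes "contracts_after {1..n} K \<epsilon>"
  shows "window_max (t + (K + max_delay)) \<le> (1 - \<epsilon>) * window_max t"
proof (rule window_max_le)
  fix i s
  assume "i \<in> {1..n}" and "int (t + (K + max_delay)) - int max_delay \<le> s"
  moreover from this have "int t + int K \<le> s"
    by simp
  ultimately show "\<bar>y i s\<bar> \<le> (1 - \<epsilon>) * window_max t"
    using assms unfolding contracts_after_def by blast
next
  show "0 \<le> (1 - \<epsilon>) * window_max t"
    using assms window_max_nonneg unfolding contracts_after_def by simp
qed

theorem tendsto_zero_if_connected:
  assumes "network_connected n N gamma" and "i \<in> {1..n}"
  shows "(\<lambda>t. y i (int t)) \<longlonglongrightarrow> 0"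
proof -
  obtain K \<epsilon> where contr: "contracts_after {1..n} K \<epsilon>"
    using contracts_after_finite[of "{1..n}"] contracts_after_if_connected[OF assms(1)] by auto
  have "0 < \<epsilon>"
    using contr unfolding contracts_after_def by blast
  have "\<forall>t. norm (y i (int t)) \<le> window_max t"
    using abs_le_window_max[OF assms(2)] by simp
  moreover have "window_max \<longlonglongrightarrow> 0"
    using decseq_tendsto_zero_if_contracts[OF decseq_window_max window_max_nonneg
        window_max_contracts[OF contr]] \<open>0 < \<epsilon>\<close>
    by simp
  ultimately show ?thesis
    by (rule Lim_null_comparison[OF always_eventually])
qed

end

theorem mainTheorem7:
  fixes n :: nat and x0 :: real
    and N :: "nat \<Rightarrow> nat set" and gamma :: "nat \<Rightarrow> real"
    and T :: "nat \<Rightarrow> nat \<Rightarrow> nat" and x :: "nat \<Rightarrow> int \<Rightarrow> real"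
  assumes nbr_sub: "\<And>i. i \<in> {1..n} \<Longrightarrow> N i \<subseteq> {1..n} - {i}"
    and nbr_sym: "\<And>i j. i \<in> {1..n} \<Longrightarrow> j \<in> {1..n} \<Longrightarrow> (j \<in> N i \<longleftrightarrow> i \<in> N j)"
    and gamma01: "\<And>i. i \<in> {1..n} \<Longrightarrow> gamma i = 0 \<or> gamma i = 1"
    and conn: "network_connected n N gamma"
    and update: "\<And>i t. i \<in> {1..n} \<Longrightarrow>
       x i (int t + 1) =
         (x i (int t) + (\<Sum>j\<in>N i. x j (int t - int (T j i))) + gamma i * x0)
         / (1 + real (card (N i)) + gamma i)"
  shows "\<forall>i\<in>{1..n}. (\<lambda>t::nat. x i (int t)) \<longlonglongrightarrow> x0"
proof -
  interpret delayed_leader_follower n N gamma T "\<lambda>i s. x i s - x0"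
  proof
    fix i t
    assume i: "i \<in> {1..n}"
    then show "N i \<subseteq> {1..n}" "0 \<le> gamma i"
      using nbr_sub gamma01 by force+
    have "0 < 1 + real (card (N i)) + gamma i"
      using gamma01[OF i] by (auto simp: add_pos_nonneg)
    moreover have "(\<Sum>j\<in>N i. x j (int t - int (T j i)) - x0)
        = (\<Sum>j\<in>N i. x j (int t - int (T j i))) - real (card (N i)) * x0"
      by (simp add: sum_subtractf)
    ultimately show "x i (int t + 1) - x0 =
        (x i (int t) - x0 + (\<Sum>j\<in>N i. x j (int t - int (T j i)) - x0)) / (1 + real (card (N i)) + gamma i)"
      unfolding update[OF i] by (simp add: field_simps)
  qed
  show ?thesis
    using tendsto_zero_if_connected[OF conn] by (simp add: LIM_zero_iff)
qed

end
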